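(* Let $n\ge 3$, let $F\subseteq E(BH_n)$ with $|F|=4n-5$ and $\delta(BH_n-F)\ge 2$. Then at least one of the following holds: (1) there is an integer $m\in\{0,1,\dots,n-1\}$ such that $|F\cap\partial D_m|\ge 3$ and $\delta(BH_n-F-\partial D_m)\ge 2$; (2) there are two integers $m,m'\in\{0,1,\dots,n-1\}$ such that $|F\cap\partial D_m|\ge 2$ and $|F\cap\partial D_{m'}|\ge 2$, and moreover, for each $k\in\{m,m'\}$, the graph $BH_n-F-\partial D_k$ has no isolated vertex and at most one vertex of degree $1$.
   Context: The $n$-dimensional balanced hypercube $BH_n$ has vertex set $\{0,1,2,3\}^n$, vertices written $(a_0,a_1,\dots,a_{n-1})$. A vertex $(a_0,a_1,\dots,a_{n-1})$ is adjacent exactly to the $2n$ vertices $((a_0\pm 1)\bmod 4,a_1,\dots,a_{n-1})$ and $((a_0\pm1)\bmod 4,a_1,\dots,a_{i-1},(a_i+(-1)^{a_0})\bmod 4,a_{i+1},\dots,a_{n-1})$ for $1\le i\le n-1$. An edge $(u,v)$ is a $0$-dimension edge if $u,v$ differ only in the coordinate $a_0$; it is an $i$-dimension edge ($1\le i\le n-1$) if $u,v$ differ in the coordinates $a_0$ and $a_i$. $\partial D_d$ denotes the set of all $d$-dimension edges. For an edge set $S$, $BH_n-F-S$ is the graph on $V(BH_n)$ with edge set $E(BH_n)\setminus(F\cup S)$. *)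

theory Defs
  imports Main
begin

definition bh_verts :: "nat \<Rightarrow> nat list set" where
  "bh_verts n = {a. length a = n \<and> (\<forall>i<n. a ! i < 4)}"

text \<open>(a - 1) mod 4 is written (a + 3) mod 4; (-1)^a0 step likewise.\<close>
definition bh_adj :: "nat \<Rightarrow> nat list \<Rightarrow> nat list \<Rightarrow> bool" where
  "bh_adj n u v \<longleftrightarrow> u \<in> bh_verts n \<and>
     (\<exists>s\<in>{1,3::nat}.
        v = u[0 := (u ! 0 + s) mod 4] \<or>
        (\<exists>i. 1 \<le> i \<and> i \<le> n - 1 \<and>
           v = u[0 := (u ! 0 + s) mod 4,
                 i := (u ! i + (if even (u ! 0) then 1 else 3)) mod 4]))"

definition bh_edges :: "nat \<Rightarrow> nat list set set" where
  "bh_edges n = {{u, v} | u v. bh_adj n u v}"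

definition dim_edges :: "nat \<Rightarrow> nat \<Rightarrow> nat list set set" where
  "dim_edges n d = {e \<in> bh_edges n. \<exists>u v. e = {u, v} \<and>
      (\<forall>j<n. j \<noteq> 0 \<and> j \<noteq> d \<longrightarrow> u ! j = v ! j) \<and>
      (d \<noteq> 0 \<longrightarrow> u ! d \<noteq> v ! d)}"

definition deg_in :: "nat list set set \<Rightarrow> nat list \<Rightarrow> nat" where
  "deg_in E x = card {e \<in> E. x \<in> e}"

end

theory Submission
  imports Defs
begin

text \<open>
  Write f(x) for the number of faulty edges at x and f_k(x) \<le> 2 for those of dimension k.
  Deleting all k-dimension edges leaves x with degree 2n - 2 - f(x) + f_k(x), so a vertex of
  residual degree at most 1 has f(x) \<ge> 2n - 3.  As BH_n is bipartite, a vertex set W spans at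
  most |W|^2/4 edges, whence the sum of f over W is at most 4n - 5 + |W|^2/4: no four vertices,
  and for n \<ge> 4 no three, have f \<ge> 2n - 3, and three such vertices force n = 3 and f = 3.
  If only one dimension contains two faults it contains at least 3n - 4 of them and every vertex
  keeps residual degree n - 1 there, giving the first alternative.  Otherwise a failure of both
  alternatives produces a dimension with a vertex of residual degree 0 or two of residual degree 1,
  and following the dimensions in which these few high-fault vertices lose both edges always
  yields a third or fourth high-fault vertex.
\<close>

lemma ex_less_split:
  fixes P :: "nat \<Rightarrow> bool"
  assumes "n \<ge> 1"
  shows "(\<exists>i<n. P i) \<longleftrightarrow> P 0 \<or> (\<exists>i. 1 \<le> i \<and> i \<le> n - 1 \<and> P i)"
  using assms
  by (metis One_nat_def Suc_le_eq Suc_pred le_less_trans less_one linorder_not_less zero_less_diff)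

lemma card_ge_2E:
  assumes "2 \<le> card A"
  obtains x y where "x \<in> A" "y \<in> A" "x \<noteq> y"
proof -
  have "finite A" using assms card.infinite by fastforce
  with assms show thesis
    using that card_le_Suc0_iff_eq[of A] by fastforce
qed

lemma sum_le_card_plus_card_twos:
  fixes g :: "'a \<Rightarrow> nat"
  assumes "finite A" "\<forall>i\<in>A. g i \<le> 2"
  shows "sum g A \<le> card A + card {i \<in> A. g i = 2}"
proof -
  have "sum g A \<le> (\<Sum>i\<in>A. 1 + (if g i = 2 then 1 else 0))"
    using assms(2) by (intro sum_mono) fastforce
  also have "\<dots> = card A + card {i \<in> A. g i = 2}"
    unfolding sum.distrib using sum.inter_filter[OF assms(1), of "\<lambda>_. 1::nat" "\<lambda>i. g i = 2"]
    by simp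
  finally show ?thesis .
qed

lemma mult_le_square_sum_div_4: "(a::nat) * b \<le> (a + b)^2 div 4"
proof -
  have "4 * (a * b) \<le> (a + b)^2"
  proof (cases "a \<le> b")
    case True
    then obtain d where "b = a + d" using le_Suc_ex by blast
    then show ?thesis by (simp add: power2_eq_square algebra_simps)
  next
    case False
    then obtain d where "a = b + d" by (metis le_Suc_ex nat_le_linear)
    then show ?thesis by (simp add: power2_eq_square algebra_simps)
  qed
  then show ?thesis by simp
qed

lemma sum_card_incident:
  assumes "finite W" "finite F"
  shows "(\<Sum>w\<in>W. card {e \<in> F. w \<in> e}) = (\<Sum>e\<in>F. card (W \<inter> e))"
proof -
  have "(\<Sum>w\<in>W. card {e \<in> F. w \<in> e}) = (\<Sum>w\<in>W. \<Sum>e\<in>F. if w \<in> e then 1 else 0)"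
    using assms(2) by (simp add: sum.inter_filter[symmetric])
  also have "\<dots> = (\<Sum>e\<in>F. \<Sum>w\<in>W. if w \<in> e then 1 else 0)"
    by (rule sum.swap)
  also have "\<dots> = (\<Sum>e\<in>F. card (W \<inter> e))"
    using assms(1) by (simp add: sum.inter_filter[symmetric] Int_def)
  finally show ?thesis .
qed

lemma less_4_cases: "(a::nat) < 4 \<Longrightarrow> a = 0 \<or> a = 1 \<or> a = 2 \<or> a = 3"
  by arith

lemma step_mod_4:
  assumes "(a::nat) < 4" "s \<in> {1,3}"
  shows "(a + s) mod 4 \<noteq> a" and "(a + 1) mod 4 \<noteq> (a + 3) mod 4"
    and "even ((a + s) mod 4) \<longleftrightarrow> odd a"
  using assms less_4_cases[of a] by auto

text \<open>The neighbour of x along dimension i; s \<in> {1,3} encodes the step \<plusminus>1 in coordinate 0.\<close>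

definition bh_nbr :: "nat list \<Rightarrow> nat \<Rightarrow> nat \<Rightarrow> nat list" where
  "bh_nbr x i s = (if i = 0 then x[0 := (x!0 + s) mod 4]
     else x[0 := (x!0 + s) mod 4, i := (x!i + (if even (x!0) then 1 else 3)) mod 4])"

lemma length_bh_nbr [simp]: "length (bh_nbr x i s) = length x"
  by (simp add: bh_nbr_def)

lemma nth_bh_nbr: "j < length x \<Longrightarrow> bh_nbr x i s ! j =
   (if j = 0 then (x!0 + s) mod 4
    else if j = i then (x!i + (if even (x!0) then 1 else 3)) mod 4 else x!j)"
  by (auto simp: bh_nbr_def nth_list_update)

lemma bh_adj_iff_nbr:
  assumes "n \<ge> 1"
  shows "bh_adj n u v \<longleftrightarrow> u \<in> bh_verts n \<and> (\<exists>i<n. \<exists>s\<in>{1,3}. v = bh_nbr u i s)"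
proof -
  have "(\<exists>i. 1 \<le> i \<and> i \<le> n - 1 \<and> v = bh_nbr u i s) \<longleftrightarrow>
      (\<exists>i. 1 \<le> i \<and> i \<le> n - 1 \<and>
         v = u[0 := (u ! 0 + s) mod 4, i := (u ! i + (if even (u ! 0) then 1 else 3)) mod 4])" for s
    by (intro ex_cong1 conj_cong refl) (simp_all add: bh_nbr_def)
  then have "(\<exists>i<n. v = bh_nbr u i s) \<longleftrightarrow> v = u[0 := (u ! 0 + s) mod 4] \<or>
      (\<exists>i. 1 \<le> i \<and> i \<le> n - 1 \<and>
         v = u[0 := (u ! 0 + s) mod 4, i := (u ! i + (if even (u ! 0) then 1 else 3)) mod 4])" for s
    using ex_less_split[OF assms, of "\<lambda>i. v = bh_nbr u i s"] by (simp add: bh_nbr_def)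
  then show ?thesis
    unfolding bh_adj_def by blast
qed

lemma bh_nbr_in_verts: "x \<in> bh_verts n \<Longrightarrow> bh_nbr x i s \<in> bh_verts n"
  by (auto simp: bh_verts_def nth_bh_nbr)

lemma bh_nbr_bh_nbr:
  assumes x: "x \<in> bh_verts n" and "i < n" "s \<in> {1,3}"
  shows "bh_nbr (bh_nbr x i s) i (4 - s) = x"
proof (rule nth_equalityI)
  fix j assume "j < length (bh_nbr (bh_nbr x i s) i (4 - s))"
  with assms have "j < length x" "0 < length x" "i < length x" "x!0 < 4" "x!i < 4"
    by (auto simp: bh_verts_def)
  with \<open>s \<in> {1,3}\<close> show "bh_nbr (bh_nbr x i s) i (4 - s) ! j = x ! j"
    using less_4_cases[of "x!0"] less_4_cases[of "x!i"] by (auto simp: nth_bh_nbr)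
qed simp

lemma
  assumes "x \<in> bh_verts n" "n \<ge> 1" "s \<in> {1,3}"
  shows bh_nbr_neq: "bh_nbr x i s \<noteq> x"
    and bh_nbr_1_neq_3: "bh_nbr x i 1 \<noteq> bh_nbr x i 3"
    and even_bh_nbr_iff: "even (bh_nbr x i s ! 0) \<longleftrightarrow> odd (x!0)"
proof -
  have "0 < length x" "x!0 < 4" using assms by (auto simp: bh_verts_def)
  then have "bh_nbr x i t ! 0 = (x!0 + t) mod 4" for t by (simp add: nth_bh_nbr)
  with step_mod_4[OF \<open>x!0 < 4\<close> assms(3)] show "bh_nbr x i s \<noteq> x" "bh_nbr x i 1 \<noteq> bh_nbr x i 3"
      "even (bh_nbr x i s ! 0) \<longleftrightarrow> odd (x!0)"
    by metis+
qed

lemma bh_nbr_edge: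
  assumes "n \<ge> 1" "u \<in> bh_verts n" "i < n" "s \<in> {1,3}"
  shows "{u, bh_nbr u i s} \<in> bh_edges n"
  using assms unfolding bh_edges_def bh_adj_iff_nbr[OF assms(1)] by blast

lemma bh_edgeE:
  assumes "n \<ge> 1" "e \<in> bh_edges n"
  obtains u i s where "u \<in> bh_verts n" "i < n" "s \<in> {1,3}" "e = {u, bh_nbr u i s}"
  using assms unfolding bh_edges_def bh_adj_iff_nbr[OF assms(1)] by blast

lemma incident_bh_edges:
  assumes "n \<ge> 1" "x \<in> bh_verts n"
  shows "{e \<in> bh_edges n. x \<in> e} = (\<lambda>(i,s). {x, bh_nbr x i s}) ` ({..<n} \<times> {1,3})"
proof (intro equalityI subsetI)
  fix e assume "e \<in> {e \<in> bh_edges n. x \<in> e}"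
  then have "e \<in> bh_edges n" "x \<in> e" by auto
  then obtain u i s where u: "u \<in> bh_verts n" "i < n" "s \<in> {1,3}" "e = {u, bh_nbr u i s}"
    using assms(1) by (elim bh_edgeE)
  show "e \<in> (\<lambda>(i,s). {x, bh_nbr x i s}) ` ({..<n} \<times> {1,3})"
  proof (cases "x = u")
    case False
    with u \<open>x \<in> e\<close> have "x = bh_nbr u i s" by auto
    with bh_nbr_bh_nbr[OF u(1-3)] have "e = {x, bh_nbr x i (4 - s)}"
      using u(4) by auto
    moreover have "(i, 4 - s) \<in> {..<n} \<times> {1,3}" using u(2,3) by auto
    ultimately show ?thesis by force
  qed (use u in force)
qed (use bh_nbr_edge[OF assms] in auto)

lemma bh_nbr_nth_neq_iff:
  assumes "x \<in> bh_verts n" "0 < j" "j < n"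
  shows "bh_nbr x i s ! j \<noteq> x ! j \<longleftrightarrow> j = i"
  using assms less_4_cases[of "x!j"] by (auto simp: bh_verts_def nth_bh_nbr)

lemma bh_nbr_edge_in_dim_iff:
  assumes "n \<ge> 1" "x \<in> bh_verts n" "i < n" "s \<in> {1,3}" "k < n"
  shows "{x, bh_nbr x i s} \<in> dim_edges n k \<longleftrightarrow> k = i"
proof -
  let ?y = "bh_nbr x i s"
  have "{x, ?y} \<in> dim_edges n k \<longleftrightarrow>
      (\<forall>j<n. j \<noteq> 0 \<and> j \<noteq> k \<longrightarrow> x ! j = ?y ! j) \<and> (k \<noteq> 0 \<longrightarrow> x ! k \<noteq> ?y ! k)"
    using bh_nbr_edge[OF assms(1-4)] by (auto simp: dim_edges_def doubleton_eq_iff)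
  also have "\<dots> \<longleftrightarrow> k = i"
    using bh_nbr_nth_neq_iff[OF assms(2)] assms(3,5) by (metis neq0_conv)
  finally show ?thesis .
qed

lemma dim_edges_subset: "dim_edges n k \<subseteq> bh_edges n"
  by (auto simp: dim_edges_def)

lemma bh_edge_dim_unique:
  assumes "n \<ge> 1" "e \<in> dim_edges n j" "e \<in> dim_edges n k" "j < n" "k < n"
  shows "j = k"
proof -
  obtain u i s where "u \<in> bh_verts n" "i < n" "s \<in> {1,3}" "e = {u, bh_nbr u i s}"
    using assms(1,2) dim_edges_subset by (blast elim: bh_edgeE)
  with assms bh_nbr_edge_in_dim_iff show ?thesis by metis
qed

lemma bh_edge_in_dim:
  assumes "n \<ge> 1" "e \<in> bh_edges n"
  shows "\<exists>k<n. e \<in> dim_edges n k"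
proof -
  obtain u i s where "u \<in> bh_verts n" "i < n" "s \<in> {1,3}" "e = {u, bh_nbr u i s}"
    using assms by (elim bh_edgeE)
  with assms(1) bh_nbr_edge_in_dim_iff show ?thesis by metis
qed

lemma bh_edge_endpoints:
  assumes "n \<ge> 1" "e \<in> bh_edges n"
  obtains a b where "e = {a, b}" "a \<noteq> b" "a \<in> bh_verts n" "b \<in> bh_verts n"
    "even (a!0) \<longleftrightarrow> odd (b!0)"
proof -
  obtain u i s where u: "u \<in> bh_verts n" "i < n" "s \<in> {1,3}" "e = {u, bh_nbr u i s}"
    using assms by (elim bh_edgeE)
  have "u \<noteq> bh_nbr u i s" using bh_nbr_neq[OF u(1) assms(1) u(3)] by metis
  with u(1,4) show thesis
    using that bh_nbr_in_verts[OF u(1)] even_bh_nbr_iff[OF u(1) assms(1) u(3)] by blast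
qed

lemma card_incident_dim_edges:
  assumes "n \<ge> 1" "x \<in> bh_verts n" "k < n"
  shows "card ({e \<in> bh_edges n. x \<in> e} \<inter> dim_edges n k) = 2"
proof -
  have "{e \<in> bh_edges n. x \<in> e} \<inter> dim_edges n k = {{x, bh_nbr x k 1}, {x, bh_nbr x k 3}}"
    using bh_nbr_edge_in_dim_iff[OF assms(1,2)] assms(3)
    unfolding incident_bh_edges[OF assms(1,2)] by auto
  moreover have "{x, bh_nbr x k 1} \<noteq> {x, bh_nbr x k 3}"
    using bh_nbr_1_neq_3[OF assms(2,1)] bh_nbr_neq[OF assms(2,1)]
    by (auto simp: doubleton_eq_iff)
  ultimately show ?thesis by simp
qed

lemma finite_bh_verts: "finite (bh_verts n)"
proof (rule finite_subset)
  show "bh_verts n \<subseteq> {xs. set xs \<subseteq> {0..<4} \<and> length xs = n}"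
    by (auto simp: bh_verts_def in_set_conv_nth)
qed (rule finite_lists_length_eq, simp)

lemma finite_bh_edges:
  assumes "n \<ge> 1"
  shows "finite (bh_edges n)"
proof (rule finite_subset)
  show "bh_edges n \<subseteq> Pow (bh_verts n)"
    using assms by (blast elim: bh_edge_endpoints)
qed (simp add: finite_bh_verts)

lemma card_eq_sum_card_dim_edges:
  assumes "n \<ge> 1" "S \<subseteq> bh_edges n"
  shows "card S = (\<Sum>k<n. card (S \<inter> dim_edges n k))"
proof -
  have "S = (\<Union>k<n. S \<inter> dim_edges n k)"
    using bh_edge_in_dim[OF assms(1)] assms(2) by blast
  moreover have "finite S"
    using finite_bh_edges[OF assms(1)] assms(2) finite_subset by blast
  then have "card (\<Union>k<n. S \<inter> dim_edges n k) = (\<Sum>k<n. card (S \<inter> dim_edges n k))"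
    by (intro card_UN_disjoint) (use bh_edge_dim_unique[OF assms(1)] in auto)
  ultimately show ?thesis by simp
qed

lemma card_incident_bh_edges:
  assumes "n \<ge> 1" "x \<in> bh_verts n"
  shows "card {e \<in> bh_edges n. x \<in> e} = 2 * n"
  using card_eq_sum_card_dim_edges[OF assms(1), of "{e \<in> bh_edges n. x \<in> e}"]
    card_incident_dim_edges[OF assms] by simp

lemma card_bh_edges_within_le:
  assumes "n \<ge> 1" "F \<subseteq> bh_edges n" "finite W"
  shows "card {e \<in> F. e \<subseteq> W} \<le> card W ^ 2 div 4"
proof -
  let ?E = "{w \<in> W. even (w!0)}" and ?O = "{w \<in> W. odd (w!0)}"
  have "{e \<in> F. e \<subseteq> W} \<subseteq> (\<lambda>(a,b). {a,b}) ` (?E \<times> ?O)"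
  proof
    fix e assume e: "e \<in> {e \<in> F. e \<subseteq> W}"
    then obtain a b where ab: "e = {a, b}" "even (a!0) \<longleftrightarrow> odd (b!0)"
      using assms(1,2) by (blast elim: bh_edge_endpoints)
    then have "(a, b) \<in> ?E \<times> ?O \<or> (b, a) \<in> ?E \<times> ?O" using e by auto
    then show "e \<in> (\<lambda>(a,b). {a,b}) ` (?E \<times> ?O)"
      using ab(1) by (auto simp: insert_commute)
  qed
  then have "card {e \<in> F. e \<subseteq> W} \<le> card ((\<lambda>(a,b). {a,b}) ` (?E \<times> ?O))"
    by (rule card_mono[rotated]) (use assms(3) in simp)
  also have "\<dots> \<le> card (?E \<times> ?O)"
    by (rule card_image_le) (use assms(3) in simp)
  also have "\<dots> = card ?E * card ?O" by (rule card_cartesian_product)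
  also have "\<dots> \<le> (card ?E + card ?O)^2 div 4" by (rule mult_le_square_sum_div_4)
  also have "card ?E + card ?O = card (?E \<union> ?O)"
    by (rule card_Un_disjoint[symmetric]) (use assms(3) in auto)
  also have "?E \<union> ?O = W" by auto
  finally show ?thesis .
qed

lemma sum_card_incident_le:
  assumes "n \<ge> 1" "F \<subseteq> bh_edges n" "finite W"
  shows "(\<Sum>w\<in>W. card {e \<in> F. w \<in> e}) \<le> card F + card W ^ 2 div 4"
proof -
  have fin: "finite F" using assms(1,2) finite_bh_edges finite_subset by blast
  have "(\<Sum>w\<in>W. card {e \<in> F. w \<in> e}) = (\<Sum>e\<in>F. card (W \<inter> e))"
    by (rule sum_card_incident[OF assms(3) fin])
  also have "\<dots> \<le> (\<Sum>e\<in>F. 1 + (if e \<subseteq> W then 1 else 0))"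
  proof (rule sum_mono)
    fix e assume "e \<in> F"
    then obtain a b where "e = {a, b}" using assms(1,2) by (blast elim: bh_edge_endpoints)
    then show "card (W \<inter> e) \<le> 1 + (if e \<subseteq> W then 1 else 0)"
      by (cases "a \<in> W"; cases "b \<in> W") (auto simp: Int_insert_right card_insert_if)
  qed
  also have "\<dots> = card F + card {e \<in> F. e \<subseteq> W}"
  proof -
    have "(\<Sum>e\<in>F. if e \<subseteq> W then 1 else 0) = card {e \<in> F. e \<subseteq> W}"
      using sum.inter_filter[OF fin, of "\<lambda>_. 1::nat", symmetric] by simp
    then show ?thesis by (subst sum.distrib) simp
  qed
  also have "\<dots> \<le> card F + card W ^ 2 div 4"
    using card_bh_edges_within_le[OF assms] by simp
  finally show ?thesis .
qed

locale bh_fault_set =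
  fixes n :: nat and F :: "nat list set set"
  assumes n_ge_3: "n \<ge> 3"
    and faults_subset: "F \<subseteq> bh_edges n"
    and card_faults: "card F = 4 * n - 5"
    and min_degree: "\<forall>x\<in>bh_verts n. deg_in (bh_edges n - F) x \<ge> 2"
begin

abbreviation fault_deg :: "nat list \<Rightarrow> nat" where
  "fault_deg x \<equiv> card {e \<in> F. x \<in> e}"

abbreviation dim_fault_deg :: "nat \<Rightarrow> nat list \<Rightarrow> nat" where
  "dim_fault_deg k x \<equiv> card {e \<in> F \<inter> dim_edges n k. x \<in> e}"

abbreviation dim_fault_card :: "nat \<Rightarrow> nat" where
  "dim_fault_card k \<equiv> card (F \<inter> dim_edges n k)"

abbreviation residual_deg :: "nat \<Rightarrow> nat list \<Rightarrow> nat" where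
  "residual_deg k x \<equiv> deg_in (bh_edges n - F - dim_edges n k) x"

definition good_dim :: "nat \<Rightarrow> bool" where
  "good_dim k \<longleftrightarrow> (\<forall>x\<in>bh_verts n. residual_deg k x \<ge> 1) \<and>
     card {x \<in> bh_verts n. residual_deg k x = 1} \<le> 1"

lemma n_ge_1: "n \<ge> 1"
  using n_ge_3 by simp

lemma finite_faults: "finite F"
  using finite_bh_edges[OF n_ge_1] faults_subset finite_subset by blast

lemma dim_fault_deg_le_2:
  assumes "x \<in> bh_verts n" "k < n"
  shows "dim_fault_deg k x \<le> 2"
proof -
  have "dim_fault_deg k x \<le> card ({e \<in> bh_edges n. x \<in> e} \<inter> dim_edges n k)"
    using faults_subset finite_bh_edges[OF n_ge_1] by (intro card_mono) auto
  then show ?thesis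
    using card_incident_dim_edges[OF n_ge_1 assms] by simp
qed

lemma dim_fault_deg_le_card: "dim_fault_deg k x \<le> dim_fault_card k"
  using finite_faults by (intro card_mono) auto

lemma fault_deg_eq_sum:
  assumes "x \<in> bh_verts n"
  shows "fault_deg x = (\<Sum>k<n. dim_fault_deg k x)"
proof -
  have "fault_deg x = (\<Sum>k<n. card ({e \<in> F. x \<in> e} \<inter> dim_edges n k))"
    using faults_subset by (intro card_eq_sum_card_dim_edges[OF n_ge_1]) auto
  moreover have "{e \<in> F. x \<in> e} \<inter> dim_edges n k = {e \<in> F \<inter> dim_edges n k. x \<in> e}" for k
    by auto
  ultimately show ?thesis by simp
qed

lemma sum_dim_fault_card: "(\<Sum>k<n. dim_fault_card k) = 4 * n - 5"
  using card_eq_sum_card_dim_edges[OF n_ge_1 faults_subset] card_faults by simp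

lemma fault_deg_le:
  assumes "x \<in> bh_verts n"
  shows "fault_deg x \<le> 2 * n - 2"
proof -
  have "{e \<in> bh_edges n - F. x \<in> e} = {e \<in> bh_edges n. x \<in> e} - {e \<in> F. x \<in> e}"
    by auto
  moreover have "card ({e \<in> bh_edges n. x \<in> e} - {e \<in> F. x \<in> e}) = 2 * n - fault_deg x"
    using card_incident_bh_edges[OF n_ge_1 assms] finite_faults faults_subset
    by (subst card_Diff_subset) auto
  ultimately have "deg_in (bh_edges n - F) x = 2 * n - fault_deg x"
    by (simp add: deg_in_def)
  with min_degree assms show ?thesis by force
qed

lemma residual_deg_eq:
  assumes "x \<in> bh_verts n" "k < n"
  shows "residual_deg k x + fault_deg x + 2 = 2 * n + dim_fault_deg k x"
proof -
  let ?Ex = "{e \<in> bh_edges n. x \<in> e}" and ?Fx = "{e \<in> F. x \<in> e}"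
  let ?Dx = "?Ex \<inter> dim_edges n k"
  have fin: "finite ?Ex" "finite ?Fx"
    using finite_bh_edges[OF n_ge_1] finite_faults by auto
  have "residual_deg k x = card (?Ex - (?Fx \<union> ?Dx))"
    unfolding deg_in_def by (rule arg_cong[where f = card]) auto
  also have "\<dots> = card ?Ex - card (?Fx \<union> ?Dx)"
    using fin faults_subset by (intro card_Diff_subset) auto
  finally have "residual_deg k x + card (?Fx \<union> ?Dx) = 2 * n"
    using card_incident_bh_edges[OF n_ge_1 assms(1)] card_mono[OF fin(1), of "?Fx \<union> ?Dx"]
      faults_subset by fastforce
  moreover have "card (?Fx \<union> ?Dx) + card (?Fx \<inter> ?Dx) = fault_deg x + 2"
    using card_Un_Int[of ?Fx ?Dx] fin card_incident_dim_edges[OF n_ge_1 assms] by simp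
  moreover have "?Fx \<inter> ?Dx = {e \<in> F \<inter> dim_edges n k. x \<in> e}"
    using faults_subset by auto
  ultimately show ?thesis by simp
qed

lemma dim_fault_deg_pair_le:
  assumes "x \<noteq> y"
  shows "dim_fault_deg k x + dim_fault_deg k y \<le> dim_fault_card k + 1"
proof -
  let ?A = "{e \<in> F \<inter> dim_edges n k. x \<in> e}" and ?B = "{e \<in> F \<inter> dim_edges n k. y \<in> e}"
  have "?A \<inter> ?B \<subseteq> {{x, y}}"
    using faults_subset assms by (auto elim!: bh_edge_endpoints[OF n_ge_1])
  then have "card (?A \<inter> ?B) \<le> 1"
    using card_mono[of "{{x, y}}" "?A \<inter> ?B"] by simp
  moreover have "card (?A \<union> ?B) \<le> dim_fault_card k"
    using finite_faults by (intro card_mono) auto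
  ultimately show ?thesis
    using card_Un_Int[of ?A ?B] finite_faults by simp
qed

lemma dim_fault_card_ge_2:
  assumes "u \<noteq> v" "u \<noteq> w" "v \<noteq> w"
    and "dim_fault_deg k u \<ge> 1" "dim_fault_deg k v \<ge> 1" "dim_fault_deg k w \<ge> 1"
  shows "dim_fault_card k \<ge> 2"
proof (rule ccontr)
  assume "\<not> dim_fault_card k \<ge> 2"
  then have single: "e = e'" if "e \<in> F \<inter> dim_edges n k" "e' \<in> F \<inter> dim_edges n k" for e e'
    using card_le_Suc0_iff_eq[of "F \<inter> dim_edges n k"] finite_faults that by auto
  have "\<exists>e\<in>F \<inter> dim_edges n k. y \<in> e" if "dim_fault_deg k y \<ge> 1" for y
    using that by (metis (no_types, lifting) Collect_empty_eq card.empty not_one_le_zero)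
  then obtain e where e: "e \<in> F \<inter> dim_edges n k" "{u, v, w} \<subseteq> e"
    using assms(4-6) single by (metis empty_subsetI insert_subset)
  moreover obtain a b where "e = {a, b}"
    using e(1) faults_subset by (blast elim: bh_edge_endpoints[OF n_ge_1])
  ultimately show False using assms(1-3) by auto
qed

lemma sum_fault_deg_le:
  assumes "finite W"
  shows "(\<Sum>w\<in>W. fault_deg w) \<le> 4 * n - 5 + card W ^ 2 div 4"
  using sum_card_incident_le[OF n_ge_1 faults_subset assms] card_faults by simp

lemma high_triple:
  assumes "x \<noteq> y" "x \<noteq> z" "y \<noteq> z"
    and "2 * n - 3 \<le> fault_deg x" "2 * n - 3 \<le> fault_deg y" "2 * n - 3 \<le> fault_deg z"
  shows "n = 3 \<and> fault_deg x = 3 \<and> fault_deg y = 3 \<and> fault_deg z = 3"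
proof -
  have "card {x, y, z} = 3" using assms(1-3) by simp
  then have "fault_deg x + fault_deg y + fault_deg z \<le> 4 * n - 3"
    using sum_fault_deg_le[of "{x, y, z}"] assms(1-3) n_ge_3 by (simp only:) simp
  with assms(4-6) n_ge_3 show ?thesis by linarith
qed

lemma no_high_quadruple:
  assumes "distinct [x, y, z, w]"
    and "2 * n - 3 \<le> fault_deg x" "2 * n - 3 \<le> fault_deg y"
    and "2 * n - 3 \<le> fault_deg z" "2 * n - 3 \<le> fault_deg w"
  shows False
proof -
  have "card {x, y, z, w} = 4" using assms(1) by simp
  then have "fault_deg x + fault_deg y + fault_deg z + fault_deg w \<le> 4 * n - 1"
    using sum_fault_deg_le[of "{x, y, z, w}"] assms(1) n_ge_3 by (simp only:) (simp add: add.assoc)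
  with assms(2-5) n_ge_3 show False by linarith
qed

lemma
  assumes "x \<in> bh_verts n" "k < n"
  shows high_if_residual_deg_le_1: "residual_deg k x \<le> 1 \<Longrightarrow> 2 * n - 3 \<le> fault_deg x"
    and residual_deg_0: "residual_deg k x = 0 \<Longrightarrow> fault_deg x = 2 * n - 2 \<and> dim_fault_deg k x = 0"
    and residual_deg_1: "residual_deg k x = 1 \<Longrightarrow> fault_deg x = 2 * n - 3 + dim_fault_deg k x"
    and residual_deg_ge_2: "dim_fault_deg k x = 2 \<Longrightarrow> 2 \<le> residual_deg k x"
  using residual_deg_eq[OF assms] dim_fault_deg_le_2[OF assms] fault_deg_le[OF assms(1)] n_ge_3
  by linarith+

lemma fault_deg_split:
  assumes "x \<in> bh_verts n" "a < n"
  shows "fault_deg x = dim_fault_deg a x + (\<Sum>k\<in>{..<n} - {a}. dim_fault_deg k x)"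
  using fault_deg_eq_sum[OF assms(1)] sum.remove[of "{..<n}" a] assms(2) by simp

lemma residual_deg_0_full_dims:
  assumes "x \<in> bh_verts n" "a < n" "residual_deg a x = 0" "j < n" "j \<noteq> a"
  shows "dim_fault_deg j x = 2"
proof -
  let ?A = "{..<n} - {a}"
  let ?T = "{k \<in> ?A. dim_fault_deg k x = 2}"
  have "card ?A + card ?A \<le> card ?A + card ?T"
    using sum_le_card_plus_card_twos[of ?A "\<lambda>k. dim_fault_deg k x"] dim_fault_deg_le_2[OF assms(1)]
      fault_deg_split[OF assms(1,2)] residual_deg_0[OF assms(1-3)] assms(2) by simp
  then have "?T = ?A"
    by (intro card_seteq) auto
  with assms(4,5) show ?thesis by blast
qed

lemma residual_deg_1_full_dims:
  assumes "x \<in> bh_verts n" "a < n" "residual_deg a x = 1"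
  shows "n - 2 \<le> card {k \<in> {..<n} - {a}. dim_fault_deg k x = 2}"
  using sum_le_card_plus_card_twos[of "{..<n} - {a}" "\<lambda>k. dim_fault_deg k x"]
    dim_fault_deg_le_2[OF assms(1)] fault_deg_split[OF assms(1,2)] residual_deg_1[OF assms] assms(2)
  by simp

lemma fault_deg_three_dims:
  assumes "n = 3" "x \<in> bh_verts n" "distinct [a, t, b]" "a < 3" "t < 3" "b < 3"
  shows "fault_deg x = dim_fault_deg a x + dim_fault_deg t x + dim_fault_deg b x"
proof -
  have "{..<n} = {a, t, b}"
    using assms(1,3-6) by auto
  with fault_deg_eq_sum[OF assms(2)] assms(3) show ?thesis by simp
qed

lemma not_good_dim:
  assumes "\<not> good_dim k"
  shows "(\<exists>x\<in>bh_verts n. residual_deg k x = 0) \<or>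
    (\<exists>x\<in>bh_verts n. \<exists>y\<in>bh_verts n. x \<noteq> y \<and> residual_deg k x = 1 \<and> residual_deg k y = 1)"
  using assms card_le_Suc0_iff_eq[of "{x \<in> bh_verts n. residual_deg k x = 1}"] finite_bh_verts
  unfolding good_dim_def by (auto simp: not_le)

lemma unique_heavy_dim:
  assumes unique: "\<And>k k'. k < n \<Longrightarrow> k' < n \<Longrightarrow> 2 \<le> dim_fault_card k \<Longrightarrow> 2 \<le> dim_fault_card k' \<Longrightarrow> k = k'"
  shows "\<exists>m<n. 3 \<le> dim_fault_card m \<and> (\<forall>x\<in>bh_verts n. 2 \<le> residual_deg m x)"
proof -
  have "\<exists>m<n. 2 \<le> dim_fault_card m"
  proof (rule ccontr)
    assume "\<nexists>m. m < n \<and> 2 \<le> dim_fault_card m"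
    then have "(\<Sum>k<n. dim_fault_card k) \<le> n"
      using sum_bounded_above[of "{..<n}" dim_fault_card 1] by (force simp: not_le)
    with sum_dim_fault_card n_ge_3 show False by simp
  qed
  then obtain m where m: "m < n" "2 \<le> dim_fault_card m" by blast
  let ?A = "{..<n} - {m}"
  have light: "dim_fault_card k \<le> 1" if "k \<in> ?A" for k
    using unique[of k m] m that by force
  have "(\<Sum>k<n. dim_fault_card k) = dim_fault_card m + (\<Sum>k\<in>?A. dim_fault_card k)"
    using sum.remove[of "{..<n}" m] m(1) by simp
  also have "(\<Sum>k\<in>?A. dim_fault_card k) \<le> n - 1"
    using sum_bounded_above[of ?A dim_fault_card 1] light m(1) by simp
  finally have "3 \<le> dim_fault_card m"
    using sum_dim_fault_card m(1) n_ge_3 by simp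
  moreover have "2 \<le> residual_deg m x" if x: "x \<in> bh_verts n" for x
  proof -
    have "dim_fault_deg k x \<le> 1" if "k \<in> ?A" for k
      using light[OF that] dim_fault_deg_le_card[of k x] by linarith
    then have "(\<Sum>k\<in>?A. dim_fault_deg k x) \<le> n - 1"
      using sum_bounded_above[of ?A "\<lambda>k. dim_fault_deg k x" 1] m(1) by simp
    with fault_deg_split[OF x m(1)] residual_deg_eq[OF x m(1)] m(1) n_ge_3 show ?thesis
      by simp
  qed
  ultimately show ?thesis using m(1) by blast
qed

end

locale bh_counterexample = bh_fault_set +
  assumes heavy_dim_low_residual:
      "\<And>m. m < n \<Longrightarrow> 3 \<le> dim_fault_card m \<Longrightarrow> \<exists>x\<in>bh_verts n. residual_deg m x \<le> 1"
    and heavy_dims_not_good: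
      "\<And>m m'. m < n \<Longrightarrow> m' < n \<Longrightarrow> m \<noteq> m' \<Longrightarrow> 2 \<le> dim_fault_card m \<Longrightarrow> 2 \<le> dim_fault_card m'
        \<Longrightarrow> \<not> good_dim m \<or> \<not> good_dim m'"
begin

lemma exists_bad_dim: "\<exists>k<n. \<not> good_dim k"
proof -
  have "\<not> (\<forall>k k'. k < n \<longrightarrow> k' < n \<longrightarrow> 2 \<le> dim_fault_card k \<longrightarrow> 2 \<le> dim_fault_card k' \<longrightarrow> k = k')"
  proof
    assume "\<forall>k k'. k < n \<longrightarrow> k' < n \<longrightarrow> 2 \<le> dim_fault_card k \<longrightarrow> 2 \<le> dim_fault_card k' \<longrightarrow> k = k'"
    then obtain m where "m < n" "3 \<le> dim_fault_card m" "\<forall>x\<in>bh_verts n. 2 \<le> residual_deg m x"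
      using unique_heavy_dim by blast
    with heavy_dim_low_residual[of m] show False by fastforce
  qed
  then obtain k k' where "k < n" "k' < n" "2 \<le> dim_fault_card k" "2 \<le> dim_fault_card k'" "k \<noteq> k'"
    by blast
  with heavy_dims_not_good show ?thesis by blast
qed

lemma good_dim_at_saturated_vertex:
  assumes x: "x \<in> bh_verts n" "fault_deg x = 2 * n - 2"
    and "p < n" "q < n" "p \<noteq> q" "dim_fault_deg p x = 2" "dim_fault_deg q x = 2"
  shows "good_dim p"
proof (rule ccontr)
  assume "\<not> good_dim p"
  have no_third: False if "y \<noteq> x" "z \<noteq> x" "y \<noteq> z" "2 * n - 3 \<le> fault_deg y" "2 * n - 3 \<le> fault_deg z" for y z
    using high_triple[of x y z] that x(2) n_ge_3 by fastforce
  have res_x: "2 \<le> residual_deg p x" "2 \<le> residual_deg q x"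
    using residual_deg_ge_2 x(1) assms(3-7) by auto
  from not_good_dim[OF \<open>\<not> good_dim p\<close>] show False
  proof (elim disjE bexE conjE)
    fix y assume y: "y \<in> bh_verts n" "residual_deg p y = 0"
    have "y \<noteq> x" using y res_x by auto
    have "fault_deg y = 2 * n - 2" "dim_fault_deg q y = 2"
      using residual_deg_0[OF y(1) assms(3) y(2)] residual_deg_0_full_dims[OF y(1) assms(3) y(2) assms(4)]
        assms(5) by auto
    then have "3 \<le> dim_fault_card q" "2 \<le> residual_deg q y"
      using dim_fault_deg_pair_le[OF \<open>y \<noteq> x\<close>, of q] assms(7) residual_deg_ge_2[OF y(1) assms(4)]
      by auto
    then obtain w where w: "w \<in> bh_verts n" "residual_deg q w \<le> 1"
      using heavy_dim_low_residual[OF assms(4)] by blast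
    then show False
      using no_third[OF \<open>y \<noteq> x\<close>, of w] high_if_residual_deg_le_1[OF w(1) assms(4) w(2)]
        \<open>fault_deg y = 2 * n - 2\<close> \<open>2 \<le> residual_deg q y\<close> res_x(2) by fastforce
  next
    fix y z assume "y \<in> bh_verts n" "z \<in> bh_verts n" "y \<noteq> z"
      "residual_deg p y = 1" "residual_deg p z = 1"
    then show False
      using no_third[of y z] high_if_residual_deg_le_1[OF _ assms(3)] res_x(1) by fastforce
  qed
qed

lemma residual_deg_pos:
  assumes x: "x \<in> bh_verts n" and a: "a < n"
  shows "0 < residual_deg a x"
proof (rule ccontr)
  assume "\<not> 0 < residual_deg a x"
  then have zero: "residual_deg a x = 0" by simp
  have "2 \<le> card ({..<n} - {a})" using a n_ge_3 by simp
  then obtain p q where pq: "p \<in> {..<n} - {a}" "q \<in> {..<n} - {a}" "p \<noteq> q"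
    by (rule card_ge_2E)
  then have full: "dim_fault_deg p x = 2" "dim_fault_deg q x = 2"
    using residual_deg_0_full_dims[OF x a zero] by auto
  then have "2 \<le> dim_fault_card p" "2 \<le> dim_fault_card q"
    using dim_fault_deg_le_card by metis+
  moreover have "good_dim p" "good_dim q"
    using good_dim_at_saturated_vertex[OF x] residual_deg_0[OF x a zero] full pq by auto
  ultimately show False
    using heavy_dims_not_good[of p q] pq by blast
qed

lemma bad_dim_witnesses:
  assumes "k < n" "\<not> good_dim k"
  obtains x y where "x \<in> bh_verts n" "y \<in> bh_verts n" "x \<noteq> y"
    "residual_deg k x = 1" "residual_deg k y = 1"
  using not_good_dim[OF assms(2)] residual_deg_pos[OF _ assms(1)] that by fastforce

lemma third_high_vertex:
  assumes "u \<in> bh_verts n" "t < n" "\<not> good_dim t" "dim_fault_deg t u = 2"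
  obtains w where "w \<in> bh_verts n" "w \<noteq> u" "w \<noteq> v" "residual_deg t w = 1"
proof -
  obtain p q where "p \<in> bh_verts n" "q \<in> bh_verts n" "p \<noteq> q"
    "residual_deg t p = 1" "residual_deg t q = 1"
    using bad_dim_witnesses[OF assms(2,3)] .
  moreover have "2 \<le> residual_deg t u"
    using residual_deg_ge_2[OF assms(1,2,4)] .
  ultimately have "p \<noteq> u" "q \<noteq> u"
    by auto
  then show thesis
    using that \<open>p \<in> bh_verts n\<close> \<open>q \<in> bh_verts n\<close> \<open>p \<noteq> q\<close>
      \<open>residual_deg t p = 1\<close> \<open>residual_deg t q = 1\<close>
    by (cases "p = v") auto
qed

lemma n_eq_3: "n = 3"
proof (rule ccontr)
  assume "n \<noteq> 3"
  then have "n \<ge> 4" using n_ge_3 by simp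
  obtain a where a: "a < n" "\<not> good_dim a"
    using exists_bad_dim by blast
  obtain u v where uv: "u \<in> bh_verts n" "v \<in> bh_verts n" "u \<noteq> v"
    "residual_deg a u = 1" "residual_deg a v = 1"
    using bad_dim_witnesses[OF a] .
  have "2 \<le> card {k \<in> {..<n} - {a}. dim_fault_deg k u = 2}"
    using residual_deg_1_full_dims[OF uv(1) a(1) uv(4)] \<open>n \<ge> 4\<close> by simp
  then obtain t t' where t: "t < n" "t' < n" "t \<noteq> t'"
    "dim_fault_deg t u = 2" "dim_fault_deg t' u = 2"
    by (elim card_ge_2E) auto
  then have "2 \<le> dim_fault_card t" "2 \<le> dim_fault_card t'"
    using dim_fault_deg_le_card by metis+
  with heavy_dims_not_good t obtain s where s: "s < n" "\<not> good_dim s" "dim_fault_deg s u = 2"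
    by blast
  obtain w where "w \<in> bh_verts n" "w \<noteq> u" "w \<noteq> v" "residual_deg s w = 1"
    using third_high_vertex[OF uv(1) s] .
  then have "n = 3"
    using high_triple[of u v w] uv high_if_residual_deg_le_1[OF _ s(1)] high_if_residual_deg_le_1[OF _ a(1)]
    by fastforce
  with \<open>n \<noteq> 3\<close> show False ..
qed

lemma good_dim_three_high:
  assumes "u \<in> bh_verts n" "v \<in> bh_verts n" "distinct [u, v, w]" "k < n"
    and "fault_deg u = 2 * n - 3" "fault_deg v = 2 * n - 3" "2 * n - 3 \<le> fault_deg w"
    and "1 \<le> dim_fault_deg k u" "1 \<le> dim_fault_deg k v"
  shows "good_dim k"
proof (rule ccontr)
  assume "\<not> good_dim k"
  then obtain p q where pq: "p \<in> bh_verts n" "q \<in> bh_verts n" "p \<noteq> q"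
    "residual_deg k p = 1" "residual_deg k q = 1"
    using bad_dim_witnesses[OF assms(4)] by blast
  have "2 \<le> residual_deg k u" "2 \<le> residual_deg k v"
    using residual_deg_eq[OF assms(1,4)] residual_deg_eq[OF assms(2,4)] assms(5-9) n_ge_3 by simp_all
  then have "p \<notin> {u, v}" "q \<notin> {u, v}"
    using pq(4,5) by auto
  then obtain z where z: "z \<in> {p, q}" "distinct [u, v, w, z]"
    using pq(3) assms(3) by (cases "p = w") auto
  then have "2 * n - 3 \<le> fault_deg z"
    using high_if_residual_deg_le_1[OF _ assms(4)] pq by auto
  with z(2) assms(5-7) show False
    by (intro no_high_quadruple[of u v w z]) simp_all
qed

lemma good_dim_if_other_full_dim:
  assumes uv: "u \<in> bh_verts n" "v \<in> bh_verts n" "u \<noteq> v" "residual_deg a u = 1" "residual_deg a v = 1"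
    and dims: "distinct [a, t, t']" "a < n" "t < n" "t' < n"
    and "dim_fault_deg t u = 2" "dim_fault_deg t' v = 2"
  shows "good_dim t"
proof (rule ccontr)
  assume "\<not> good_dim t"
  then obtain w where w: "w \<in> bh_verts n" "w \<noteq> u" "w \<noteq> v" "residual_deg t w = 1"
    using third_high_vertex[OF uv(1) dims(3)] assms(10) by blast
  moreover have high_w: "2 * n - 3 \<le> fault_deg w"
    using high_if_residual_deg_le_1[OF w(1) dims(3)] w(4) by simp
  ultimately have n3: "n = 3" and faults: "fault_deg u = 3" "fault_deg v = 3"
    using high_triple[of u v w] uv high_if_residual_deg_le_1[OF _ dims(2)] by fastforce+
  have "dim_fault_deg a v = 0"
    using residual_deg_1[OF uv(2) dims(2) uv(5)] n3 faults by simp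
  then have "dim_fault_deg t v = 1"
    using fault_deg_three_dims[OF n3 uv(2) dims(1)] dims n3 faults assms(11) by simp
  then have "good_dim t"
    using uv(3) w(2,3) dims(3) assms(10) n3 faults high_w
    by (intro good_dim_three_high[OF uv(1,2), of w t]) auto
  with \<open>\<not> good_dim t\<close> show False ..
qed

lemma no_shared_full_dim:
  assumes uv: "u \<in> bh_verts n" "v \<in> bh_verts n" "u \<noteq> v" "residual_deg a u = 1" "residual_deg a v = 1"
    and dims: "a < n" "t < n" "t \<noteq> a"
    and full: "dim_fault_deg t u = 2" "dim_fault_deg t v = 2"
  shows False
proof -
  have "3 \<le> dim_fault_card t"
    using dim_fault_deg_pair_le[OF uv(3), of t] full by simp
  then obtain w where w: "w \<in> bh_verts n" "residual_deg t w \<le> 1"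
    using heavy_dim_low_residual[OF dims(2)] by blast
  then have "residual_deg t w = 1"
    using residual_deg_pos[OF w(1) dims(2)] by simp
  have "w \<noteq> u" "w \<noteq> v"
    using w(2) residual_deg_ge_2[OF uv(1) dims(2) full(1)] residual_deg_ge_2[OF uv(2) dims(2) full(2)] by auto
  then have n3: "n = 3" and faults: "fault_deg u = 3" "fault_deg v = 3" "fault_deg w = 3"
    using high_triple[of u v w] uv(1-5) w high_if_residual_deg_le_1[OF _ dims(1)]
      high_if_residual_deg_le_1[OF _ dims(2)] by fastforce+
  obtain b where "b < 3" "b \<noteq> a" "b \<noteq> t"
    using dims n3 by (intro that[of "3 - a - t"]) arith+
  then have b: "b < 3" "distinct [a, t, b]"
    using dims(3) by auto
  have "dim_fault_deg a u = 0" "dim_fault_deg a v = 0" "dim_fault_deg t w = 0"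
    using residual_deg_1[OF uv(1) dims(1) uv(4)] residual_deg_1[OF uv(2) dims(1) uv(5)]
      residual_deg_1[OF w(1) dims(2) \<open>residual_deg t w = 1\<close>] n3 faults by simp_all
  moreover have "fault_deg x = dim_fault_deg a x + dim_fault_deg t x + dim_fault_deg b x"
    if "x \<in> bh_verts n" for x
    using fault_deg_three_dims[OF n3 that b(2)] dims b(1) n3 by simp
  moreover have "dim_fault_deg a w \<le> 2"
    using dim_fault_deg_le_2[OF w(1) dims(1)] .
  ultimately have hit_b: "dim_fault_deg b u = 1" "dim_fault_deg b v = 1" "1 \<le> dim_fault_deg b w"
    using uv(1,2) w(1) faults full by fastforce+
  have "2 \<le> dim_fault_card t" "2 \<le> dim_fault_card b"
    using \<open>3 \<le> dim_fault_card t\<close> dim_fault_card_ge_2[of u v w b] uv(3) \<open>w \<noteq> u\<close> \<open>w \<noteq> v\<close> hit_b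
    by auto
  moreover have "good_dim t" "good_dim b"
    using good_dim_three_high[OF uv(1,2), of w] uv(3) \<open>w \<noteq> u\<close> \<open>w \<noteq> v\<close> dims(2) b n3 faults full hit_b
    by simp_all
  ultimately show False
    using heavy_dims_not_good[of t b] dims(2) b n3 by auto
qed

lemma impossible: False
proof -
  obtain a where a: "a < n" "\<not> good_dim a"
    using exists_bad_dim by blast
  obtain u v where uv: "u \<in> bh_verts n" "v \<in> bh_verts n" "u \<noteq> v"
    "residual_deg a u = 1" "residual_deg a v = 1"
    using bad_dim_witnesses[OF a] .
  have "{k \<in> {..<n} - {a}. dim_fault_deg k x = 2} \<noteq> {}"
    if "x \<in> bh_verts n" "residual_deg a x = 1" for x
  proof -
    have "0 < card {k \<in> {..<n} - {a}. dim_fault_deg k x = 2}"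
      using residual_deg_1_full_dims[OF that(1) a(1) that(2)] n_eq_3 by simp
    then show ?thesis by (metis card.empty less_irrefl)
  qed
  then obtain t t' where t: "t < n" "t \<noteq> a" "dim_fault_deg t u = 2"
    and t': "t' < n" "t' \<noteq> a" "dim_fault_deg t' v = 2"
    using uv by blast
  show False
  proof (cases "t = t'")
    case True
    then show False
      using no_shared_full_dim[OF uv a(1) t(1,2,3)] t'(3) by simp
  next
    case False
    then have dims: "distinct [a, t, t']" using t(2) t'(2) by simp
    have "good_dim t"
      by (rule good_dim_if_other_full_dim[OF uv dims a(1) t(1) t'(1) t(3) t'(3)])
    moreover have "good_dim t'"
      using uv dims a(1) t t'
      by (intro good_dim_if_other_full_dim[of v u a t' t]) auto
    moreover have "2 \<le> dim_fault_card t" "2 \<le> dim_fault_card t'"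
      using dim_fault_deg_le_card t(3) t'(3) by metis+
    ultimately show False
      using heavy_dims_not_good[OF t(1) t'(1) False] by blast
  qed
qed

end

theorem (in bh_fault_set) heavy_dim_cases:
  "(\<exists>m<n. 3 \<le> dim_fault_card m \<and> (\<forall>x\<in>bh_verts n. 2 \<le> residual_deg m x)) \<or>
   (\<exists>m<n. \<exists>m'<n. m \<noteq> m' \<and> 2 \<le> dim_fault_card m \<and> 2 \<le> dim_fault_card m' \<and>
      good_dim m \<and> good_dim m')"
proof (rule ccontr)
  assume neg: "\<not> ?thesis"
  interpret bh_counterexample n F
  proof unfold_locales
    fix m assume "m < n" "3 \<le> dim_fault_card m"
    with neg obtain x where "x \<in> bh_verts n" "\<not> 2 \<le> residual_deg m x"
      by blast
    then show "\<exists>x\<in>bh_verts n. residual_deg m x \<le> 1"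
      by (intro bexI[of _ x]) simp_all
  next
    fix m m' assume "m < n" "m' < n" "m \<noteq> m'" "2 \<le> dim_fault_card m" "2 \<le> dim_fault_card m'"
    with neg show "\<not> good_dim m \<or> \<not> good_dim m'"
      by blast
  qed
  show False by (rule impossible)
qed

theorem lemma6:
  fixes n :: nat and F :: "nat list set set"
  assumes "n \<ge> 3"
    and "F \<subseteq> bh_edges n"
    and "card F = 4 * n - 5"
    and "\<forall>x\<in>bh_verts n. deg_in (bh_edges n - F) x \<ge> 2"
  shows "(\<exists>m<n. card (F \<inter> dim_edges n m) \<ge> 3 \<and>
            (\<forall>x\<in>bh_verts n. deg_in (bh_edges n - F - dim_edges n m) x \<ge> 2))
       \<or> (\<exists>m<n. \<exists>m'<n. m \<noteq> m' \<and>
            card (F \<inter> dim_edges n m) \<ge> 2 \<and> card (F \<inter> dim_edges n m') \<ge> 2 \<and>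
            (\<forall>k\<in>{m, m'}.
               (\<forall>x\<in>bh_verts n. deg_in (bh_edges n - F - dim_edges n k) x \<ge> 1) \<and>
               card {x\<in>bh_verts n. deg_in (bh_edges n - F - dim_edges n k) x = 1} \<le> 1))"
proof -
  interpret bh_fault_set n F
    using assms by unfold_locales
  from heavy_dim_cases show ?thesis
    unfolding good_dim_def by auto
qed

end
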